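(* Let $N\ge1$ and for $1\le i\le N$ let $S_i:\mathcal H\to\mathcal H$ be a $\kappa_i$-strict pseudocontraction with $0\le\kappa_i<1$; set $\kappa=\max_i\kappa_i$ and assume $F=\bigcap_{i=1}^N\mathrm{Fix}(S_i)\neq\emptyset$. For each $n$ let $\lambda_{n,1},\dots,\lambda_{n,N}>0$ with $\sum_i\lambda_{n,i}=1$ and $\inf_n\lambda_{n,i}>0$ for each $i$, and set $Q_n=\sum_{i=1}^N\lambda_{n,i}S_i$. Let $\alpha_n\in(\kappa,1)$ and $T_nx=\frac{x+R_nx}{2}+\frac12\big(\frac{\kappa-\alpha_n}{1-\alpha_n}\big)(x-R_nx)$ with $R_nx=\alpha_nx+(1-\alpha_n)Q_nx$. Then $(T_n)_{n\ge0}$ is coherent: for every bounded sequence $(z_n)$ with $\sum_n\|z_{n+1}-z_n\|^2<\infty$ and $\sum_n\|z_n-T_nz_n\|^2<\infty$, every weak cluster point of $(z_n)$ lies in $\bigcap_n\mathrm{Fix}(T_n)=F$.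
   Context: A map $Q:\mathcal H\to\mathcal H$ is a $\kappa$-strict pseudocontraction ($0\le\kappa<1$) if $\|Qx-Qy\|^2\le\|x-y\|^2+\kappa\|(I-Q)x-(I-Q)y\|^2$ for all $x,y$. $\mathrm{Fix}(T)=\{x:Tx=x\}$. $\mathcal H$ is a real Hilbert space. *)

theory Defs
  imports "HOL-Analysis.Analysis"
begin

text \<open>A real Hilbert space is modelled by a type of class real_inner and complete_space.\<close>

definition strict_pseudocontraction :: "real \<Rightarrow> ('a::real_inner \<Rightarrow> 'a) \<Rightarrow> bool" where
  "strict_pseudocontraction k Q \<longleftrightarrow> 0 \<le> k \<and> k < 1 \<and>
     (\<forall>x y. (norm (Q x - Q y))\<^sup>2 \<le> (norm (x - y))\<^sup>2 + k * (norm ((x - Q x) - (y - Q y)))\<^sup>2)"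

definition Fix :: "('a \<Rightarrow> 'a) \<Rightarrow> 'a set" where
  "Fix T = {x. T x = x}"

definition weakly_converges :: "(nat \<Rightarrow> 'a::real_inner) \<Rightarrow> 'a \<Rightarrow> bool" where
  "weakly_converges x p \<longleftrightarrow> (\<forall>y. ((\<lambda>n. inner (x n) y) \<longlongrightarrow> inner p y) sequentially)"

definition weak_cluster_point :: "(nat \<Rightarrow> 'a::real_inner) \<Rightarrow> 'a \<Rightarrow> bool" where
  "weak_cluster_point x p \<longleftrightarrow> (\<exists>r. strict_mono r \<and> weakly_converges (x \<circ> r) p)"

definition coherent :: "(nat \<Rightarrow> 'a::real_inner \<Rightarrow> 'a) \<Rightarrow> bool" where
  "coherent T \<longleftrightarrow> (\<forall>z. bounded (range z)
       \<longrightarrow> summable (\<lambda>n. (norm (z (Suc n) - z n))\<^sup>2)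
       \<longrightarrow> summable (\<lambda>n. (norm (z n - T n (z n)))\<^sup>2)
       \<longrightarrow> (\<forall>p. weak_cluster_point z p \<longrightarrow> p \<in> (\<Inter>n. Fix (T n))))"

end

theory Submission
  imports Defs
begin

(* The operators T n are relaxations of convex combinations Q n = (SUM i. lam n i S i):
   a direct computation gives  T n x = x - ((1 - kap)/2) (x - Q n x),  so Fix (T n) = Fix (Q n)
   and small residuals x - T n x are the same as small residuals x - Q n x.
   For a common fixed point p of the kappa_i-strict pseudocontractions S_i we have
     (1 - kappa_i) |x - S_i x|^2 <= 2 <x - p, x - S_i x>,
   and averaging these inequalities shows (i) Fix (Q n) is the common fixed point set F and
   (ii) if z n - Q n (z n) -> 0 along a bounded sequence and the weights stay bounded away
   from 0, then z n - S_i (z n) -> 0 for every i.  Demiclosedness of I - S_i at 0 then puts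
   every weak cluster point of z into F. *)

lemma norm_add_sq:
  fixes a b :: "'a::real_inner"
  shows "(norm (a + b))\<^sup>2 = (norm a)\<^sup>2 + 2 * inner a b + (norm b)\<^sup>2"
  by (simp add: power2_norm_eq_inner inner_add_left inner_add_right inner_commute)

text \<open>Square-summable residuals tend to 0; this is all that coherence uses of the hypothesis
  on the residuals.\<close>
lemma summable_norm_sq_imp_tendsto_zero:
  fixes v :: "nat \<Rightarrow> 'a::real_normed_vector"
  assumes "summable (\<lambda>n. (norm (v n))\<^sup>2)"
  shows "v \<longlonglongrightarrow> 0"
proof -
  have "(\<lambda>n. sqrt ((norm (v n))\<^sup>2)) \<longlonglongrightarrow> sqrt 0"
    by (intro tendsto_intros summable_LIMSEQ_zero[OF assms])
  then show ?thesis by (simp add: tendsto_norm_zero_iff)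
qed

text \<open>The basic inequality of a strict pseudocontraction relative to one of its fixed points;
  it says that x - S x points away from every fixed point.\<close>
lemma strict_pseudocontraction_fixed_point_ineq:
  assumes "strict_pseudocontraction k S" "S p = p"
  shows "(1 - k) * (norm (x - S x))\<^sup>2 \<le> 2 * inner (x - p) (x - S x)"
proof -
  have "(norm (S x - S p))\<^sup>2 \<le> (norm (x - p))\<^sup>2 + k * (norm ((x - S x) - (p - S p)))\<^sup>2"
    using assms(1) unfolding strict_pseudocontraction_def by blast
  moreover have "S x - S p = (x - p) + - (x - S x)" using assms(2) by simp
  moreover have "(norm ((x - p) + - (x - S x)))\<^sup>2
      = (norm (x - p))\<^sup>2 - 2 * inner (x - p) (x - S x) + (norm (x - S x))\<^sup>2"
    by (simp only: norm_add_sq inner_minus_right norm_minus_cancel)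
  ultimately show ?thesis using assms(2) by (simp add: algebra_simps)
qed

lemma strict_pseudocontraction_demiclosed:
  assumes spc: "strict_pseudocontraction k S"
    and wc: "weakly_converges x p"
    and bd: "\<And>n. norm (x n - p) \<le> B"
    and e0: "(\<lambda>n. x n - S (x n)) \<longlonglongrightarrow> 0"
  shows "S p = p"
proof -
  define d where "d = p - S p"
  define e where "e n = x n - S (x n)" for n
  have k: "k < 1" using spc unfolding strict_pseudocontraction_def by simp
  have ineq: "(1 - k) * (norm (d - e n))\<^sup>2 + 2 * inner (x n - p) d \<le> 2 * inner (x n - p) (e n)" for n
  proof -
    have "(norm (S (x n) - S p))\<^sup>2 \<le> (norm (x n - p))\<^sup>2 + k * (norm ((x n - S (x n)) - (p - S p)))\<^sup>2"
      using spc unfolding strict_pseudocontraction_def by blast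
    moreover have "S (x n) - S p = (x n - p) + (d - e n)" by (simp add: d_def e_def)
    moreover have "norm ((x n - S (x n)) - (p - S p)) = norm (d - e n)"
      by (metis d_def e_def norm_minus_commute)
    moreover have "(norm ((x n - p) + (d - e n)))\<^sup>2
        = (norm (x n - p))\<^sup>2 + 2 * inner (x n - p) (d - e n) + (norm (d - e n))\<^sup>2"
      by (rule norm_add_sq)
    ultimately show ?thesis by (simp add: algebra_simps)
  qed
  have e_lim: "e \<longlonglongrightarrow> 0" using e0 by (simp add: e_def[abs_def])
  have "(\<lambda>n. inner (x n) d) \<longlonglongrightarrow> inner p d" using wc unfolding weakly_converges_def by blast
  from tendsto_diff[OF this tendsto_const[of "inner p d"]]
  have weak_d: "(\<lambda>n. inner (x n - p) d) \<longlonglongrightarrow> 0" by (simp add: inner_diff_left)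
  have lhs: "(\<lambda>n. (1 - k) * (norm (d - e n))\<^sup>2 + 2 * inner (x n - p) d) \<longlonglongrightarrow> (1 - k) * (norm (d - 0))\<^sup>2 + 2 * 0"
    by (intro tendsto_intros e_lim weak_d)
  have rhs: "(\<lambda>n. 2 * inner (x n - p) (e n)) \<longlonglongrightarrow> 0"
  proof (rule Lim_null_comparison)
    show "\<forall>\<^sub>F n in sequentially. norm (2 * inner (x n - p) (e n)) \<le> 2 * B * norm (e n)"
    proof (intro always_eventually allI)
      fix n
      have "\<bar>inner (x n - p) (e n)\<bar> \<le> norm (x n - p) * norm (e n)" by (rule Cauchy_Schwarz_ineq2)
      also have "\<dots> \<le> B * norm (e n)" using bd[of n] by (simp add: mult_right_mono)
      finally show "norm (2 * inner (x n - p) (e n)) \<le> 2 * B * norm (e n)" by simp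
    qed
    show "(\<lambda>n. 2 * B * norm (e n)) \<longlonglongrightarrow> 0"
      using tendsto_mult_right_zero[OF tendsto_norm_zero[OF e_lim], of "2 * B"] by simp
  qed
  have "(1 - k) * (norm d)\<^sup>2 \<le> 0" using LIMSEQ_le[OF lhs rhs] ineq by simp
  then have "d = 0" using k by (simp add: mult_le_0_iff)
  then show ?thesis by (simp add: d_def)
qed

lemma strict_pseudocontraction_weak_cluster_point_fixed:
  assumes spc: "strict_pseudocontraction k S"
    and bz: "bounded (range z)"
    and res: "(\<lambda>n. z n - S (z n)) \<longlonglongrightarrow> 0"
    and wcp: "weak_cluster_point z p"
  shows "S p = p"
proof -
  obtain r where r: "strict_mono r" "weakly_converges (z \<circ> r) p"
    using wcp unfolding weak_cluster_point_def by blast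
  obtain B where B: "\<And>n. norm (z n) \<le> B" using bz unfolding bounded_iff by blast
  have "norm ((z \<circ> r) n - p) \<le> B + norm p" for n
    using B[of "r n"] norm_triangle_ineq4[of "z (r n)" p] by simp
  moreover have "(\<lambda>n. (z \<circ> r) n - S ((z \<circ> r) n)) \<longlonglongrightarrow> 0"
    using LIMSEQ_subseq_LIMSEQ[OF res r(1)] by (simp add: o_def)
  ultimately show ?thesis by (rule strict_pseudocontraction_demiclosed[OF spc r(2)])
qed

lemma convex_combination_fixed_point_ineq:
  fixes S :: "'i \<Rightarrow> 'a::real_inner \<Rightarrow> 'a"
  assumes I: "finite I"
    and spc: "\<And>i. i \<in> I \<Longrightarrow> strict_pseudocontraction (k i) (S i)"
    and p: "\<And>i. i \<in> I \<Longrightarrow> S i p = p"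
    and w: "\<And>i. i \<in> I \<Longrightarrow> 0 \<le> w i" "sum w I = 1"
  shows "(\<Sum>i\<in>I. w i * ((1 - k i) * (norm (x - S i x))\<^sup>2))
           \<le> 2 * inner (x - p) (x - (\<Sum>i\<in>I. w i *\<^sub>R S i x))"
proof -
  have residual: "x - (\<Sum>i\<in>I. w i *\<^sub>R S i x) = (\<Sum>i\<in>I. w i *\<^sub>R (x - S i x))"
    using w(2) by (simp add: scaleR_diff_right sum_subtractf flip: scaleR_left.sum)
  have "(\<Sum>i\<in>I. w i * ((1 - k i) * (norm (x - S i x))\<^sup>2)) \<le> (\<Sum>i\<in>I. w i * (2 * inner (x - p) (x - S i x)))"
    using strict_pseudocontraction_fixed_point_ineq[OF spc p] w(1)
    by (intro sum_mono mult_left_mono) auto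
  also have "\<dots> = 2 * inner (x - p) (x - (\<Sum>i\<in>I. w i *\<^sub>R S i x))"
    unfolding residual by (simp add: inner_sum_right sum_distrib_left algebra_simps)
  finally show ?thesis .
qed

lemma convex_combination_Fix:
  fixes S :: "'i \<Rightarrow> 'a::real_inner \<Rightarrow> 'a"
  assumes I: "finite I"
    and spc: "\<And>i. i \<in> I \<Longrightarrow> strict_pseudocontraction (k i) (S i)"
    and p: "\<And>i. i \<in> I \<Longrightarrow> S i p = p"
    and w: "\<And>i. i \<in> I \<Longrightarrow> 0 < w i" "sum w I = 1"
  shows "(\<Sum>i\<in>I. w i *\<^sub>R S i x) = x \<longleftrightarrow> (\<forall>i\<in>I. S i x = x)"
proof
  assume fixed: "(\<Sum>i\<in>I. w i *\<^sub>R S i x) = x"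
  have k: "k i < 1" if "i \<in> I" for i using spc[OF that] unfolding strict_pseudocontraction_def by simp
  have nonneg: "0 \<le> w i * ((1 - k i) * (norm (x - S i x))\<^sup>2)" if "i \<in> I" for i
    using w(1)[OF that] k[OF that] by simp
  have w_nonneg: "\<And>i. i \<in> I \<Longrightarrow> 0 \<le> w i" using w(1) by (simp add: less_imp_le)
  have "(\<Sum>i\<in>I. w i * ((1 - k i) * (norm (x - S i x))\<^sup>2)) \<le> 0"
    using convex_combination_fixed_point_ineq[where I=I and k=k and S=S and p=p and w=w and x=x]
      I spc p w_nonneg w(2) fixed by simp
  moreover have "0 \<le> (\<Sum>i\<in>I. w i * ((1 - k i) * (norm (x - S i x))\<^sup>2))"
    by (rule sum_nonneg) (rule nonneg)
  ultimately have "(\<Sum>i\<in>I. w i * ((1 - k i) * (norm (x - S i x))\<^sup>2)) = 0" by linarith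
  then have terms_zero: "\<forall>i\<in>I. w i * ((1 - k i) * (norm (x - S i x))\<^sup>2) = 0"
    using sum_nonneg_eq_0_iff[OF I nonneg] by simp
  show "\<forall>i\<in>I. S i x = x"
  proof
    fix i assume i: "i \<in> I"
    with terms_zero have "w i * ((1 - k i) * (norm (x - S i x))\<^sup>2) = 0" by blast
    then show "S i x = x" using w(1)[OF i] k[OF i] by simp
  qed
next
  assume "\<forall>i\<in>I. S i x = x"
  then show "(\<Sum>i\<in>I. w i *\<^sub>R S i x) = x" using w(2) by (simp flip: scaleR_left.sum)
qed

lemma convex_combination_residual_transfer:
  fixes S :: "'i \<Rightarrow> 'a::real_inner \<Rightarrow> 'a"
  assumes I: "finite I"
    and spc: "\<And>i. i \<in> I \<Longrightarrow> strict_pseudocontraction (k i) (S i)"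
    and p: "\<And>i. i \<in> I \<Longrightarrow> S i p = p"
    and w: "\<And>n i. i \<in> I \<Longrightarrow> 0 \<le> w n i" "\<And>n. sum (w n) I = 1"
    and bz: "bounded (range z)"
    and res: "(\<lambda>n. z n - (\<Sum>i\<in>I. w n i *\<^sub>R S i (z n))) \<longlonglongrightarrow> 0"
    and j: "j \<in> I" and c: "c > 0" "\<And>n. c \<le> w n j"
  shows "(\<lambda>n. z n - S j (z n)) \<longlonglongrightarrow> 0"
proof -
  define q where "q n = z n - (\<Sum>i\<in>I. w n i *\<^sub>R S i (z n))" for n
  obtain B where B: "\<And>n. norm (z n) \<le> B" using bz unfolding bounded_iff by blast
  have k: "0 \<le> 1 - k i" if "i \<in> I" for i using spc[OF that] unfolding strict_pseudocontraction_def by simp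
  have C: "c * (1 - k j) > 0" using c(1) spc[OF j] unfolding strict_pseudocontraction_def by simp
  have bound: "(norm (z n - S j (z n)))\<^sup>2 \<le> (2 * (B + norm p) / (c * (1 - k j))) * norm (q n)" for n
  proof -
    have "c * (1 - k j) * (norm (z n - S j (z n)))\<^sup>2 \<le> w n j * ((1 - k j) * (norm (z n - S j (z n)))\<^sup>2)"
      using mult_right_mono[OF c(2)[of n], of "(1 - k j) * (norm (z n - S j (z n)))\<^sup>2"] k[OF j]
      by (simp add: mult.assoc)
    also have "\<dots> \<le> (\<Sum>i\<in>I. w n i * ((1 - k i) * (norm (z n - S i (z n)))\<^sup>2))"
      by (rule member_le_sum[OF j]) (use I w(1) k in simp_all)
    also have "\<dots> \<le> 2 * inner (z n - p) (q n)"
      unfolding q_def by (rule convex_combination_fixed_point_ineq[OF I spc p w])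
    also have "\<dots> \<le> 2 * (norm (z n - p) * norm (q n))"
      using Cauchy_Schwarz_ineq2[of "z n - p" "q n"] by simp
    also have "\<dots> \<le> 2 * ((B + norm p) * norm (q n))"
      using B[of n] norm_triangle_ineq4[of "z n" p] by (simp add: mult_right_mono)
    finally show ?thesis using C by (simp add: field_simps)
  qed
  have "(\<lambda>n. (norm (z n - S j (z n)))\<^sup>2) \<longlonglongrightarrow> 0"
  proof (rule Lim_null_comparison)
    show "\<forall>\<^sub>F n in sequentially. norm ((norm (z n - S j (z n)))\<^sup>2) \<le> (2 * (B + norm p) / (c * (1 - k j))) * norm (q n)"
      using bound by simp
    show "(\<lambda>n. (2 * (B + norm p) / (c * (1 - k j))) * norm (q n)) \<longlonglongrightarrow> 0"
      using res unfolding q_def[abs_def] by (intro tendsto_mult_right_zero tendsto_norm_zero)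
  qed
  then have "(\<lambda>n. sqrt ((norm (z n - S j (z n)))\<^sup>2)) \<longlonglongrightarrow> sqrt 0" by (intro tendsto_intros)
  then show ?thesis by (simp add: tendsto_norm_zero_iff)
qed

lemma convex_combination_weak_cluster_point:
  fixes S :: "'i \<Rightarrow> 'a::real_inner \<Rightarrow> 'a"
  assumes I: "finite I"
    and spc: "\<And>i. i \<in> I \<Longrightarrow> strict_pseudocontraction (k i) (S i)"
    and p: "\<And>i. i \<in> I \<Longrightarrow> S i p = p"
    and w: "\<And>n i. i \<in> I \<Longrightarrow> 0 \<le> w n i" "\<And>n. sum (w n) I = 1"
    and w_inf: "\<And>i. i \<in> I \<Longrightarrow> \<exists>c>0. \<forall>n. c \<le> w n i"
    and bz: "bounded (range z)"
    and res: "(\<lambda>n. z n - (\<Sum>i\<in>I. w n i *\<^sub>R S i (z n))) \<longlonglongrightarrow> 0"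
    and wcp: "weak_cluster_point z q"
  shows "\<forall>i\<in>I. S i q = q"
proof
  fix j assume j: "j \<in> I"
  obtain c where c: "c > 0" "\<And>n. c \<le> w n j" using w_inf[OF j] by blast
  have "(\<lambda>n. z n - S j (z n)) \<longlonglongrightarrow> 0"
    by (rule convex_combination_residual_transfer[OF I spc p w bz res j c])
  then show "S j q = q" by (rule strict_pseudocontraction_weak_cluster_point_fixed[OF spc[OF j] bz _ wcp])
qed

lemma relaxation_formula:
  fixes x q :: "'a::real_vector"
  assumes "alpha \<noteq> 1"
  defines "R \<equiv> alpha *\<^sub>R x + (1 - alpha) *\<^sub>R q"
  shows "(1/2) *\<^sub>R (x + R) + ((1/2) * ((kap - alpha) / (1 - alpha))) *\<^sub>R (x - R)
         = x - ((1 - kap) / 2) *\<^sub>R (x - q)"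
proof -
  have xR: "x - R = (1 - alpha) *\<^sub>R (x - q)" by (simp add: R_def algebra_simps)
  have coeff: "(1/2) * ((kap - alpha) / (1 - alpha)) * (1 - alpha) = (1/2) * (kap - alpha)"
    using assms(1) by (simp add: field_simps)
  have "(1/2) *\<^sub>R (x + R) = x - (1/2) *\<^sub>R (x - R)"
    by (simp add: algebra_simps flip: scaleR_add_left)
  then have "(1/2) *\<^sub>R (x + R) + ((1/2) * ((kap - alpha) / (1 - alpha))) *\<^sub>R (x - R)
      = x - ((1/2) * (1 - alpha)) *\<^sub>R (x - q) + ((1/2) * (kap - alpha)) *\<^sub>R (x - q)"
    by (simp only: xR scaleR_scaleR coeff)
  also have "\<dots> = x - ((1/2) * (1 - alpha) - (1/2) * (kap - alpha)) *\<^sub>R (x - q)"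
    by (simp add: scaleR_left_diff_distrib)
  also have "(1/2) * (1 - alpha) - (1/2) * (kap - alpha) = (1 - kap) / 2" by (simp add: field_simps)
  finally show ?thesis .
qed

lemma coherent_relaxation:
  fixes Q T :: "nat \<Rightarrow> 'a::real_inner \<Rightarrow> 'a"
  assumes c: "c \<noteq> 0"
    and T: "\<And>n x. T n x = x - c *\<^sub>R (x - Q n x)"
    and cluster: "\<And>z p. bounded (range z) \<Longrightarrow> (\<lambda>n. z n - Q n (z n)) \<longlonglongrightarrow> 0
                    \<Longrightarrow> weak_cluster_point z p \<Longrightarrow> p \<in> (\<Inter>n. Fix (Q n))"
  shows "coherent T" "Fix (T n) = Fix (Q n)"
proof -
  show "Fix (T n) = Fix (Q n)" for n using c by (auto simp: Fix_def T)
  show "coherent T"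
    unfolding coherent_def
  proof (intro allI impI)
    fix z p
    assume bz: "bounded (range z)"
      and residual_sq: "summable (\<lambda>n. (norm (z n - T n (z n)))\<^sup>2)"
      and wcp: "weak_cluster_point z p"
    from residual_sq have "(\<lambda>n. z n - T n (z n)) \<longlonglongrightarrow> 0" by (rule summable_norm_sq_imp_tendsto_zero)
    then have "(\<lambda>n. c *\<^sub>R (z n - Q n (z n))) \<longlonglongrightarrow> 0" by (simp add: T)
    then have "(\<lambda>n. z n - Q n (z n)) \<longlonglongrightarrow> 0"
      using tendsto_scaleR[OF tendsto_const[of "inverse c"]] c by fastforce
    then have "p \<in> (\<Inter>n. Fix (Q n))" using cluster bz wcp by blast
    then show "p \<in> (\<Inter>n. Fix (T n))" using c by (simp add: Fix_def T)
  qed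
qed

theorem mainTheorem4:
  fixes N :: nat
    and S :: "nat \<Rightarrow> 'a::{real_inner, complete_space} \<Rightarrow> 'a"
    and k :: "nat \<Rightarrow> real"
    and lam :: "nat \<Rightarrow> nat \<Rightarrow> real"
    and alpha :: "nat \<Rightarrow> real"
    and T :: "nat \<Rightarrow> 'a \<Rightarrow> 'a"
  assumes N: "N \<ge> 1"
    and S: "\<And>i. i \<in> {1..N} \<Longrightarrow> strict_pseudocontraction (k i) (S i)"
    and F: "(\<Inter>i\<in>{1..N}. Fix (S i)) \<noteq> {}"
    and lam_pos: "\<And>n i. i \<in> {1..N} \<Longrightarrow> lam n i > 0"
    and lam_sum: "\<And>n. (\<Sum>i=1..N. lam n i) = 1"
    and lam_inf: "\<And>i. i \<in> {1..N} \<Longrightarrow> \<exists>c>0. \<forall>n. c \<le> lam n i"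
    and alpha: "\<And>n. Max (k ` {1..N}) < alpha n \<and> alpha n < 1"
    and T: "\<And>n x. T n x =
       (let Q = (\<Sum>i=1..N. lam n i *\<^sub>R S i x);
            R = alpha n *\<^sub>R x + (1 - alpha n) *\<^sub>R Q;
            kap = Max (k ` {1..N})
        in (1/2) *\<^sub>R (x + R) + ((1/2) * ((kap - alpha n) / (1 - alpha n))) *\<^sub>R (x - R))"
  shows "coherent T \<and> (\<Inter>n. Fix (T n)) = (\<Inter>i\<in>{1..N}. Fix (S i))"
proof -
  define kap where "kap = Max (k ` {1..N})"
  define Q where "Q n x = (\<Sum>i=1..N. lam n i *\<^sub>R S i x)" for n x
  define Fs where "Fs = (\<Inter>i\<in>{1..N}. Fix (S i))"
  obtain p0 where p0: "\<And>i. i \<in> {1..N} \<Longrightarrow> S i p0 = p0" using F unfolding Fix_def by blast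
  have kap: "(1 - kap) / 2 \<noteq> 0" using alpha[of 0] unfolding kap_def by simp
  have T_relax: "T n x = x - ((1 - kap) / 2) *\<^sub>R (x - Q n x)" for n x
    using T[of n x] alpha[of n] relaxation_formula[of "alpha n"]
    by (simp add: Let_def Q_def kap_def)
  have Fix_Q: "Fix (Q n) = Fs" for n
  proof -
    have "Q n x = x \<longleftrightarrow> (\<forall>i\<in>{1..N}. S i x = x)" for x
      unfolding Q_def by (rule convex_combination_Fix[OF _ S p0 lam_pos lam_sum]) simp
    then show ?thesis by (auto simp: Fix_def Fs_def)
  qed
  have cluster: "p \<in> (\<Inter>n. Fix (Q n))"
    if "bounded (range z)" "(\<lambda>n. z n - Q n (z n)) \<longlonglongrightarrow> 0" "weak_cluster_point z p" for z p
  proof -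
    have "\<forall>i\<in>{1..N}. S i p = p"
      using convex_combination_weak_cluster_point[OF _ S p0 _ lam_sum lam_inf] that lam_pos
      unfolding Q_def by (simp add: less_imp_le)
    then have "p \<in> Fs" by (simp add: Fs_def Fix_def)
    then show ?thesis by (simp add: Fix_Q)
  qed
  show ?thesis
    using coherent_relaxation[OF kap T_relax cluster] Fix_Q unfolding Fs_def by simp
qed

end
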